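(* For every integer $n\ge2$, $\gamma_{tr2}(P_2\square P_n)=\left\lceil\frac{3n}{2}\right\rceil$.
   Context: $P_m$ denotes the directed path with vertex set $\{0,1,\dots,m-1\}$ and arcs $(i,i+1)$ for $0\le i\le m-2$. The Cartesian product $D_1\square D_2$ has vertex set $V(D_1)\times V(D_2)$, with an arc from $(x_1,y_1)$ to $(x_2,y_2)$ iff either $(x_1,x_2)$ is an arc of $D_1$ and $y_1=y_2$, or $x_1=x_2$ and $(y_1,y_2)$ is an arc of $D_2$. For a digraph $D$ and positive integer $k$, a $k$-rainbow dominating function on $D$ is $f:V(D)\to\mathcal P(\{1,\dots,k\})$ such that every $v$ with $f(v)=\emptyset$ satisfies $\bigcup_{u\in N^-(v)}f(u)=\{1,\dots,k\}$, where $N^-(v)$ is the set of in-neighbors of $v$; its weight is $\sum_v|f(v)|$. It is total if additionally the subdigraph induced by $\{v:f(v)\ne\emptyset\}$ has no isolated vertex (a vertex with neither in- nor out-neighbors in it). $\gamma_{trk}(D)$ is the minimum weight of a total $k$-rainbow dominating function. *)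

theory Defs
  imports Complex_Main
begin

type_synonym 'a digraph = "'a set \<times> ('a \<times> 'a) set"

definition verts :: "'a digraph \<Rightarrow> 'a set" where "verts D = fst D"
definition arcs :: "'a digraph \<Rightarrow> ('a \<times> 'a) set" where "arcs D = snd D"

definition dpath :: "nat \<Rightarrow> nat digraph" where
  "dpath m = ({0..<m}, {(i, i + 1) | i. i + 1 < m})"

definition cart_prod :: "'a digraph \<Rightarrow> 'b digraph \<Rightarrow> ('a \<times> 'b) digraph" where
  "cart_prod D1 D2 = (verts D1 \<times> verts D2,
     {((x1, y1), (x2, y2)) | x1 y1 x2 y2.
        ((x1, x2) \<in> arcs D1 \<and> y1 = y2 \<and> y1 \<in> verts D2) \<or>
        (x1 = x2 \<and> x1 \<in> verts D1 \<and> (y1, y2) \<in> arcs D2)})"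

definition in_nbrs :: "'a digraph \<Rightarrow> 'a \<Rightarrow> 'a set" where
  "in_nbrs D v = {u \<in> verts D. (u, v) \<in> arcs D}"

definition rainbow_dom :: "nat \<Rightarrow> 'a digraph \<Rightarrow> ('a \<Rightarrow> nat set) \<Rightarrow> bool" where
  "rainbow_dom k D f \<longleftrightarrow>
     (\<forall>v \<in> verts D. f v \<subseteq> {1..k}) \<and>
     (\<forall>v \<in> verts D. f v = {} \<longrightarrow> (\<Union>u \<in> in_nbrs D v. f u) = {1..k})"

text \<open>Total: the subdigraph induced by the vertices with nonempty label has no isolated vertex.\<close>
definition total_rainbow_dom :: "nat \<Rightarrow> 'a digraph \<Rightarrow> ('a \<Rightarrow> nat set) \<Rightarrow> bool" where
  "total_rainbow_dom k D f \<longleftrightarrow> rainbow_dom k D f \<and>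
     (\<forall>v \<in> verts D. f v \<noteq> {} \<longrightarrow>
        (\<exists>u \<in> verts D. f u \<noteq> {} \<and> ((u, v) \<in> arcs D \<or> (v, u) \<in> arcs D)))"

definition rd_weight :: "'a digraph \<Rightarrow> ('a \<Rightarrow> nat set) \<Rightarrow> nat" where
  "rd_weight D f = (\<Sum>v \<in> verts D. card (f v))"

definition gamma_trk :: "nat \<Rightarrow> 'a digraph \<Rightarrow> nat" where
  "gamma_trk k D = (LEAST w. \<exists>f. total_rainbow_dom k D f \<and> rd_weight D f = w)"

end

theory Submission
  imports Defs
begin

text \<open>Write \<open>a\<^sub>y\<close> and \<open>b\<^sub>y\<close> for the weights of the top vertex \<open>(0,y)\<close> and the bottom vertex
  \<open>(1,y)\<close> of column \<open>y\<close> of \<open>P\<^sub>2 \<box> P\<^sub>n\<close>. Labelling the whole top row by \<open>{1}\<close> and every other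
  bottom vertex by \<open>{2}\<close> gives a total 2-rainbow dominating function of weight \<open>\<lceil>3n/2\<rceil>\<close>.
  Conversely, domination and totality only relate neighbouring columns, so the columns of any
  total 2-rainbow dominating function form a walk in a finite automaton whose states are
  \<open>(a\<^sub>y, b\<^sub>y)\<close> plus two flags recording a nonempty vertex still waiting for a nonempty
  neighbour. Charging each column its surplus \<open>2(a\<^sub>y + b\<^sub>y) - 3\<close>, a potential on the states shows
  that every walk has nonnegative total surplus, i.e. weight at least \<open>3n/2\<close>.\<close>

lemma gamma_trk_eqI:
  assumes "total_rainbow_dom k D f" and "rd_weight D f = w"
    and "\<And>g. total_rainbow_dom k D g \<Longrightarrow> w \<le> rd_weight D g"
  shows "gamma_trk k D = w"
  unfolding gamma_trk_def using assms by (intro Least_equality) blast+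

lemma rainbow_dom_card_le:
  assumes "rainbow_dom k D f" and "v \<in> verts D"
  shows "card (f v) \<le> k"
proof -
  have "f v \<subseteq> {1..k}" using assms unfolding rainbow_dom_def by blast
  then show ?thesis using card_mono[of "{1..k}" "f v"] by simp
qed

lemma rainbow_dom_card_eq_0_iff:
  assumes "rainbow_dom k D f" and "v \<in> verts D"
  shows "card (f v) = 0 \<longleftrightarrow> f v = {}"
proof -
  have "finite (f v)"
    using assms unfolding rainbow_dom_def by (meson finite_atLeastAtMost finite_subset)
  then show ?thesis by simp
qed

abbreviation grid :: "nat \<Rightarrow> nat \<Rightarrow> (nat \<times> nat) digraph" where
  "grid m n \<equiv> cart_prod (dpath m) (dpath n)"

lemma verts_grid: "verts (grid m n) = {0..<m} \<times> {0..<n}"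
  by (simp add: cart_prod_def verts_def dpath_def)

lemma arcs_grid: "((x1, y1), (x2, y2)) \<in> arcs (grid m n) \<longleftrightarrow>
    (x2 = Suc x1 \<and> x2 < m \<and> y1 = y2 \<and> y1 < n) \<or> (x1 = x2 \<and> x1 < m \<and> y2 = Suc y1 \<and> y2 < n)"
  by (auto simp add: cart_prod_def verts_def arcs_def dpath_def)

lemma in_nbrs_grid:
  assumes "x < m" and "y < n"
  shows "in_nbrs (grid m n) (x, y) =
    (if x = 0 then {} else {(x - 1, y)}) \<union> (if y = 0 then {} else {(x, y - 1)})"
  using assms unfolding in_nbrs_def verts_grid by (auto simp: arcs_grid)

lemma rd_weight_grid:
  "rd_weight (grid m n) f = (\<Sum>y<n. \<Sum>x<m. card (f (x, y)))"
proof -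
  have "rd_weight (grid m n) f = (\<Sum>x<m. \<Sum>y<n. card (f (x, y)))"
    unfolding rd_weight_def verts_grid atLeast0LessThan by (simp add: sum.cartesian_product)
  then show ?thesis by (simp add: sum.swap[of _ "{..<m}"])
qed

lemma rd_weight_ladder:
  "rd_weight (grid 2 n) f = (\<Sum>y<n. card (f (0, y)) + card (f (1, y)))"
  by (simp add: rd_weight_grid numeral_2_eq_2)

definition ladder_rdf :: "nat \<times> nat \<Rightarrow> nat set" where
  "ladder_rdf = (\<lambda>(x, y). if x = 0 then {1} else if even y then {2} else {})"

lemma rainbow_dom_ladder_rdf: "rainbow_dom 2 (grid 2 n) ladder_rdf"
  unfolding rainbow_dom_def
proof (intro conjI ballI impI)
  fix v assume "v \<in> verts (grid 2 n)"
  then show "ladder_rdf v \<subseteq> {1..2}" by (auto simp: ladder_rdf_def split: if_splits)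
next
  fix v assume v: "v \<in> verts (grid 2 n)" and empty: "ladder_rdf v = {}"
  then obtain y where "v = (1, y)" "odd y" "y < n"
    by (cases v) (auto simp: verts_grid ladder_rdf_def split: if_splits)
  then have "in_nbrs (grid 2 n) v = {(0, y), (1, y - 1)}" and "even (y - 1)"
    using odd_pos by (auto simp: in_nbrs_grid)
  then have "(\<Union>u \<in> in_nbrs (grid 2 n) v. ladder_rdf u) = {1, 2}"
    by (simp add: ladder_rdf_def insert_commute)
  also have "\<dots> = {1..2}" by auto
  finally show "(\<Union>u \<in> in_nbrs (grid 2 n) v. ladder_rdf u) = {1..2}" .
qed

lemma total_rainbow_dom_ladder_rdf:
  assumes "n \<ge> 2"
  shows "total_rainbow_dom 2 (grid 2 n) ladder_rdf"
  unfolding total_rainbow_dom_def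
proof (intro conjI rainbow_dom_ladder_rdf ballI impI)
  fix v assume "v \<in> verts (grid 2 n)" and "ladder_rdf v \<noteq> {}"
  then obtain x y where v: "v = (x, y)" "x < 2" "y < n" by (auto simp: verts_grid)
  define u :: "nat \<times> nat"
    where "u = (if x = 0 then (0, if Suc y < n then Suc y else y - 1) else (0, y))"
  have "u \<in> verts (grid 2 n)" and "(u, v) \<in> arcs (grid 2 n) \<or> (v, u) \<in> arcs (grid 2 n)"
    using v assms by (auto simp: u_def verts_grid arcs_grid)
  moreover have "ladder_rdf u \<noteq> {}" by (simp add: u_def ladder_rdf_def)
  ultimately show "\<exists>u \<in> verts (grid 2 n). ladder_rdf u \<noteq> {} \<and>
      ((u, v) \<in> arcs (grid 2 n) \<or> (v, u) \<in> arcs (grid 2 n))" by blast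
qed

lemma rd_weight_ladder_rdf: "rd_weight (grid 2 n) ladder_rdf = n + (n + 1) div 2"
proof -
  have "rd_weight (grid 2 n) ladder_rdf = (\<Sum>y<n. 1 + (if even y then 1 else 0))"
    unfolding rd_weight_ladder by (intro sum.cong) (auto simp: ladder_rdf_def)
  also have "\<dots> = n + (n + 1) div 2" by (induction n) auto
  finally show ?thesis .
qed

text \<open>A column state is \<open>(a, b, ua, ub)\<close>: the two weights and whether the top resp. bottom vertex
  is nonempty while all its neighbours seen so far are empty. \<open>credit s\<close> is the least total
  surplus \<open>\<Sum> (2(a\<^sub>y + b\<^sub>y) - 3)\<close> over column sequences obeying the local constraints below and
  ending in state \<open>s\<close> (a shortest-path potential), so \<open>credit_step\<close> is its triangle inequality.\<close>

definition credit :: "nat \<Rightarrow> nat \<Rightarrow> bool \<Rightarrow> bool \<Rightarrow> nat" where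
  "credit a b ua ub = (if a = 0 \<and> b = 0 then 2 else if a = 1 \<and> b = 1 then 1
    else if a = 1 \<and> b = 2 then 3 else if a = 2 \<and> b = 0 then 1
    else if a = 2 \<and> b = 1 then 3 else if a = 2 \<and> b = 2 then 5
    else if a = 0 \<and> b = 1 then (if ub then 0 else 2)
    else if a = 0 \<and> b = 2 then (if ub then 2 else 4)
    else (if ua then 1 else 0))"

lemma credit_step:
  fixes a b a' b' :: nat
  assumes "a \<le> 2" "b \<le> 2" "a' \<le> 2" "b' \<le> 2"
    and "a' = 0 \<Longrightarrow> a = 2" and "b' = 0 \<Longrightarrow> a' + b \<ge> 2"
    and "ua \<Longrightarrow> a' > 0" and "ub \<Longrightarrow> b' > 0"
  shows "3 + credit a' b' (a' > 0 \<and> b' = 0 \<and> a = 0) (b' > 0 \<and> a' = 0 \<and> b = 0)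
    \<le> credit a b ua ub + 2 * (a' + b')"
proof -
  have "a \<in> {0, 1, 2}" "b \<in> {0, 1, 2}" "a' \<in> {0, 1, 2}" "b' \<in> {0, 1, 2}"
    using assms(1-4) by auto
  then show ?thesis
    using assms(5-8) unfolding credit_def by (elim insertE emptyE; cases ua; cases ub; simp)
qed

text \<open>The hypotheses are what domination and totality say about the column weights
  \<open>a y = |f (0,y)|\<close>, \<open>b y = |f (1,y)|\<close> of a total 2-rainbow dominating function \<open>f\<close>.\<close>

lemma weight_lower_bound_from_columns:
  fixes a b :: "nat \<Rightarrow> nat"
  assumes "n \<ge> 1"
    and bounded: "\<And>y. y < n \<Longrightarrow> a y \<le> 2 \<and> b y \<le> 2"
    and first_top: "a 0 > 0" and first_bottom: "b 0 = 0 \<Longrightarrow> a 0 = 2"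
    and top: "\<And>y. 1 \<le> y \<Longrightarrow> y < n \<Longrightarrow> a y = 0 \<Longrightarrow> a (y - 1) = 2"
    and bottom: "\<And>y. 1 \<le> y \<Longrightarrow> y < n \<Longrightarrow> b y = 0 \<Longrightarrow> a y + b (y - 1) \<ge> 2"
    and top_partner: "\<And>y. y < n \<Longrightarrow> a y > 0 \<Longrightarrow> b y = 0 \<Longrightarrow> (y = 0 \<or> a (y - 1) = 0)
      \<Longrightarrow> y + 1 < n \<and> a (y + 1) > 0"
    and bottom_partner: "\<And>y. y < n \<Longrightarrow> b y > 0 \<Longrightarrow> a y = 0 \<Longrightarrow> (y = 0 \<or> b (y - 1) = 0)
      \<Longrightarrow> y + 1 < n \<and> b (y + 1) > 0"
  shows "3 * n \<le> 2 * (\<Sum>y<n. a y + b y)"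
proof -
  define ua where "ua y \<longleftrightarrow> a y > 0 \<and> b y = 0 \<and> (y = 0 \<or> a (y - 1) = 0)" for y
  define ub where "ub y \<longleftrightarrow> b y > 0 \<and> a y = 0 \<and> (y = 0 \<or> b (y - 1) = 0)" for y
  have invariant: "3 * Suc k + credit (a k) (b k) (ua k) (ub k) \<le> 2 * (\<Sum>y<Suc k. a y + b y)"
    if "k < n" for k
    using that
  proof (induction k)
    case 0
    have "a 0 \<in> {1, 2}" "b 0 \<in> {0, 1, 2}" using bounded[of 0] first_top 0 by auto
    then show ?case using first_bottom unfolding ua_def ub_def credit_def by auto
  next
    case (Suc k)
    have "ua (Suc k) \<longleftrightarrow> a (Suc k) > 0 \<and> b (Suc k) = 0 \<and> a k = 0"
      and "ub (Suc k) \<longleftrightarrow> b (Suc k) > 0 \<and> a (Suc k) = 0 \<and> b k = 0"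
      unfolding ua_def ub_def by simp_all
    moreover have "3 + credit (a (Suc k)) (b (Suc k))
        (a (Suc k) > 0 \<and> b (Suc k) = 0 \<and> a k = 0) (b (Suc k) > 0 \<and> a (Suc k) = 0 \<and> b k = 0)
        \<le> credit (a k) (b k) (ua k) (ub k) + 2 * (a (Suc k) + b (Suc k))"
    proof (rule credit_step)
      show "a k \<le> 2" "b k \<le> 2" "a (Suc k) \<le> 2" "b (Suc k) \<le> 2"
        using bounded Suc.prems by auto
      show "a (Suc k) = 0 \<Longrightarrow> a k = 2" using top[of "Suc k"] Suc.prems by simp
      show "b (Suc k) = 0 \<Longrightarrow> a (Suc k) + b k \<ge> 2" using bottom[of "Suc k"] Suc.prems by simp
      show "ua k \<Longrightarrow> a (Suc k) > 0" using top_partner[of k] Suc.prems unfolding ua_def by auto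
      show "ub k \<Longrightarrow> b (Suc k) > 0" using bottom_partner[of k] Suc.prems unfolding ub_def by auto
    qed
    ultimately have "3 + credit (a (Suc k)) (b (Suc k)) (ua (Suc k)) (ub (Suc k))
        \<le> credit (a k) (b k) (ua k) (ub k) + 2 * (a (Suc k) + b (Suc k))"
      by simp
    then show ?case using Suc by simp
  qed
  obtain m where "n = Suc m" using \<open>n \<ge> 1\<close> by (cases n) auto
  then show ?thesis using invariant[of m] by simp
qed

context
  fixes n :: nat and f :: "nat \<times> nat \<Rightarrow> nat set"
  assumes rdf: "total_rainbow_dom 2 (grid 2 n) f"
begin

lemma ladder_dominated:
  assumes "x < 2" "y < n" "f (x, y) = {}"
  shows "(\<Union>u \<in> in_nbrs (grid 2 n) (x, y). f u) = {1..2}"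
  using rdf assms unfolding total_rainbow_dom_def rainbow_dom_def by (auto simp: verts_grid)

lemma ladder_top_empty:
  assumes "y < n" "f (0, y) = {}"
  shows "y \<noteq> 0 \<and> f (0, y - 1) = {1..2}"
  using ladder_dominated[of 0 y] assms by (simp add: in_nbrs_grid split: if_splits)

lemma ladder_bottom_empty:
  assumes "y < n" "f (1, y) = {}"
  shows "f (0, y) \<union> (if y = 0 then {} else f (1, y - 1)) = {1..2}"
  using ladder_dominated[of 1 y] assms by (cases "y = 0") (simp_all add: in_nbrs_grid Un_commute)

lemma ladder_partner:
  assumes "x < 2" "y < n" "f (x, y) \<noteq> {}" "f (1 - x, y) = {}" "y = 0 \<or> f (x, y - 1) = {}"
  shows "y + 1 < n \<and> f (x, y + 1) \<noteq> {}"
proof -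
  have "(x, y) \<in> verts (grid 2 n)" using assms by (simp add: verts_grid)
  then obtain u where u: "u \<in> verts (grid 2 n)" "f u \<noteq> {}"
    and "(u, (x, y)) \<in> arcs (grid 2 n) \<or> ((x, y), u) \<in> arcs (grid 2 n)"
    using rdf assms(3) unfolding total_rainbow_dom_def by blast
  then have "u = (x, y + 1)"
    using assms(1,4,5) by (cases u) (auto simp: arcs_grid)
  then show ?thesis using u by (simp add: verts_grid)
qed

lemma ladder_weight_lower_bound: "3 * n \<le> 2 * rd_weight (grid 2 n) f"
proof (cases "n = 0")
  case False
  define a where "a y = card (f (0, y))" for y
  define b where "b y = card (f (1, y))" for y
  have R: "rainbow_dom 2 (grid 2 n) f" using rdf unfolding total_rainbow_dom_def by blast
  have zero_a: "a y = 0 \<longleftrightarrow> f (0, y) = {}" and zero_b: "b y = 0 \<longleftrightarrow> f (1, y) = {}" if "y < n" for y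
    unfolding a_def b_def using that rainbow_dom_card_eq_0_iff[OF R] by (simp_all add: verts_grid)
  have "3 * n \<le> 2 * (\<Sum>y<n. a y + b y)"
  proof (rule weight_lower_bound_from_columns)
    show "1 \<le> n" using False by simp
    show "a y \<le> 2 \<and> b y \<le> 2" if "y < n" for y
      unfolding a_def b_def using that rainbow_dom_card_le[OF R] by (simp add: verts_grid)
    show "a 0 > 0" using ladder_top_empty[of 0] zero_a[of 0] False by auto
    show "a 0 = 2" if "b 0 = 0"
      using ladder_bottom_empty[of 0] zero_b[of 0] that False by (simp add: a_def)
    show "a (y - 1) = 2" if "1 \<le> y" "y < n" "a y = 0" for y
      using ladder_top_empty[of y] zero_a[of y] that by (simp add: a_def)
    show "a y + b (y - 1) \<ge> 2" if "1 \<le> y" "y < n" "b y = 0" for y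
    proof -
      have "2 = card (f (0, y) \<union> f (1, y - 1))"
        using ladder_bottom_empty[of y] zero_b[of y] that by simp
      also have "\<dots> \<le> a y + b (y - 1)" unfolding a_def b_def by (rule card_Un_le)
      finally show ?thesis .
    qed
    show "y + 1 < n \<and> a (y + 1) > 0"
      if "y < n" "a y > 0" "b y = 0" "y = 0 \<or> a (y - 1) = 0" for y
    proof -
      have "f (0, y) \<noteq> {}" "f (1 - 0, y) = {}" "y = 0 \<or> f (0, y - 1) = {}"
        using that zero_a[of y] zero_b[of y] zero_a[of "y - 1"] by auto
      then have "y + 1 < n \<and> f (0, y + 1) \<noteq> {}" using ladder_partner[of 0 y] \<open>y < n\<close> by simp
      then show ?thesis using zero_a[of "y + 1"] by auto
    qed
    show "y + 1 < n \<and> b (y + 1) > 0"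
      if "y < n" "b y > 0" "a y = 0" "y = 0 \<or> b (y - 1) = 0" for y
    proof -
      have "f (1, y) \<noteq> {}" "f (1 - 1, y) = {}" "y = 0 \<or> f (1, y - 1) = {}"
        using that zero_b[of y] zero_a[of y] zero_b[of "y - 1"] by auto
      then have "y + 1 < n \<and> f (1, y + 1) \<noteq> {}" using ladder_partner[of 1 y] \<open>y < n\<close> by simp
      then show ?thesis using zero_b[of "y + 1"] by auto
    qed
  qed
  then show ?thesis unfolding rd_weight_ladder a_def b_def .
qed simp

end

lemma ceiling_three_halves: "\<lceil>3 * real n / 2\<rceil> = int (n + (n + 1) div 2)"
proof (rule ceiling_unique)
  obtain k where "n = 2 * k \<or> n = 2 * k + 1" by (metis oddE evenE)
  then show "real_of_int (int (n + (n + 1) div 2)) - 1 < 3 * real n / 2"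
    and "3 * real n / 2 \<le> real_of_int (int (n + (n + 1) div 2))"
    by (auto simp: field_simps)
qed

theorem proposition4p3:
  fixes n :: nat
  assumes "n \<ge> 2"
  shows "int (gamma_trk 2 (cart_prod (dpath 2) (dpath n))) = \<lceil>(3 * real n) / 2\<rceil>"
proof -
  have "gamma_trk 2 (grid 2 n) = n + (n + 1) div 2"
  proof (rule gamma_trk_eqI)
    show "total_rainbow_dom 2 (grid 2 n) ladder_rdf"
      using assms by (rule total_rainbow_dom_ladder_rdf)
    show "rd_weight (grid 2 n) ladder_rdf = n + (n + 1) div 2"
      by (rule rd_weight_ladder_rdf)
    show "n + (n + 1) div 2 \<le> rd_weight (grid 2 n) g" if "total_rainbow_dom 2 (grid 2 n) g" for g
      using ladder_weight_lower_bound[OF that] by linarith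
  qed
  then show ?thesis by (simp add: ceiling_three_halves)
qed

end
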